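(* Let $\mathcal{C}'$ be an $[N,k]$ MDS code over a finite field $\mathbb{F}_q$ and let $G'=[a'_{i,j}]$ ($1\le i\le k$, $1\le j\le N$) be a generator matrix of $\mathcal{C}'$. Let $n$ be the order of the (cyclic) multiplicative subgroup of $\mathbb{F}_q^\times$ generated by all non-zero entries of $G'$, and let $\zeta_n'\in\mathbb{F}_q$ be a generator of this subgroup (a primitive $n$-th root of unity), so that every non-zero entry can be written as $a'_{i,j}=(\zeta_n')^{e_{i,j}}$ with $e_{i,j}$ an integer, unique modulo $n$. Let $\zeta_n=e^{2\pi i/n}\in\mathbb{C}$ and $K=\mathbb{Q}(\zeta_n)$. Define the $k\times N$ matrix $G=[a_{i,j}]$ over $K$ by $a_{i,j}=0$ if $a'_{i,j}=0$ and $a_{i,j}=\zeta_n^{e_{i,j}}$ if $a'_{i,j}=(\zeta_n')^{e_{i,j}}$. Then the code $\mathcal{C}\subseteq K^N$ generated by $G$ is an $[N,k]$ MDS code over $K$.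
   Context: A linear $[N,k]$ code over a field $F$ is a $k$-dimensional subspace of $F^N$; it is MDS if its minimum Hamming distance equals $N-k+1$, equivalently every $k\times k$ submatrix (choice of $k$ columns) of a $k\times N$ generator matrix is non-singular. *)

theory Defs
  imports Complex_Main "Jordan_Normal_Form.Determinant"
begin

definition col_submat :: "'a mat \<Rightarrow> nat \<Rightarrow> (nat \<Rightarrow> nat) \<Rightarrow> 'a mat" where
  "col_submat G k c = mat k k (\<lambda>(i, j). G $$ (i, c j))"

text \<open>The code generated by the rows of the k x N matrix G is an [N,k] MDS code:
  G is k x N, k \<le> N, and every choice of k (distinct) columns gives a
  non-singular k x k submatrix (this also forces rank G = k).\<close>
definition generates_MDS :: "nat \<Rightarrow> nat \<Rightarrow> 'a::field mat \<Rightarrow> bool" where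
  "generates_MDS N k G \<longleftrightarrow> G \<in> carrier_mat k N \<and> k \<le> N \<and>
     (\<forall>c. strict_mono_on {0..<k} c \<longrightarrow> (\<forall>j<k. c j < N) \<longrightarrow> det (col_submat G k c) \<noteq> 0)"

definition mult_subgroup :: "'a::field set \<Rightarrow> bool" where
  "mult_subgroup T \<longleftrightarrow> 1 \<in> T \<and> 0 \<notin> T \<and> (\<forall>x\<in>T. \<forall>y\<in>T. x * y \<in> T) \<and> (\<forall>x\<in>T. inverse x \<in> T)"

definition gen_mult_subgroup :: "'a::field set \<Rightarrow> 'a set" where
  "gen_mult_subgroup S = \<Inter>{T. mult_subgroup T \<and> S \<subseteq> T}"

end

theory Submission
  imports Defs "Berlekamp_Zassenhaus.Reconstruction"
begin

(* Both G' and G are images of one matrix of monomials X^e_ij over Z[X]: under evaluation at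
   z' and at zeta_n respectively. Evaluation is a ring homomorphism, so it commutes with
   determinants, and it suffices to show that an integer polynomial P with P(zeta_n) = 0
   vanishes at every element z of exact order n of any field.
   By Dedekind's argument (Frobenius modulo a prime l not dividing n, against the
   separability of X^n - 1 modulo l) the cyclotomic polynomial is irreducible, so P also
   vanishes at all primitive n-th roots of unity zeta_n^j. Then P * H, with
   H = prod_(q prime, q | n) (X^(n/q) - 1), vanishes at all n-th roots of unity, hence
   X^n - 1 divides a power of P * H in Z[X]. Evaluating at z, where X^n - 1 vanishes and
   H does not, gives P(z) = 0. *)

section \<open>Frobenius modulo a prime\<close>

lemma add_power_prime_eq:
  fixes u v :: "'a::comm_ring_1"
  assumes "prime p"
  shows "\<exists>w. (u + v) ^ p = u ^ p + v ^ p + of_nat p * w"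
proof -
  have p0: "p > 0" using assms prime_gt_0_nat by blast
  define w where "w = (\<Sum>k\<in>{1..<p}. of_nat ((p choose k) div p) * u ^ k * v ^ (p - k))"
  have "(of_nat (p choose k) :: 'a) = of_nat p * of_nat ((p choose k) div p)" if "k \<in> {1..<p}" for k
    using dvd_choose_prime[of k p] that assms by (simp flip: of_nat_mult)
  then have middle: "(\<Sum>k\<in>{1..<p}. of_nat (p choose k) * u ^ k * v ^ (p - k)) = of_nat p * w"
    unfolding w_def sum_distrib_left by (intro sum.cong) (simp_all add: mult.assoc)
  have "{..p} = insert 0 (insert p {1..<p})" using p0 by auto
  then have "(u + v) ^ p = v ^ p + (u ^ p + (\<Sum>k\<in>{1..<p}. of_nat (p choose k) * u ^ k * v ^ (p - k)))"
    using p0 by (simp add: binomial_ring)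
  then show ?thesis unfolding middle by (auto simp: algebra_simps)
qed

lemma fermat_little_int:
  fixes a :: int
  assumes "prime p"
  shows "\<exists>t. a ^ p = a + int p * t"
proof (induction a rule: int_induct[where k = 0])
  case base
  then show ?case using assms prime_gt_0_nat by (simp add: power_0_left)
next
  case (step1 a)
  then obtain t where "a ^ p = a + int p * t" by blast
  moreover obtain w where "(a + 1) ^ p = a ^ p + 1 ^ p + of_nat p * w"
    using add_power_prime_eq[OF assms] by blast
  ultimately have "(a + 1) ^ p = a + 1 + int p * (t + w)" by (simp add: algebra_simps)
  then show ?case by blast
next
  case (step2 a)
  then obtain t where "a ^ p = a + int p * t" by blast
  moreover obtain w where "(a - 1 + 1) ^ p = (a - 1) ^ p + 1 ^ p + of_nat p * w"
    using add_power_prime_eq[OF assms] by blast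
  ultimately have "(a - 1) ^ p = a - 1 + int p * (t - w)" by (simp add: algebra_simps)
  then show ?case by blast
qed

lemma int_poly_frobenius:
  fixes g :: "int poly"
  assumes "prime p"
  shows "\<exists>h. g ^ p = g \<circ>\<^sub>p monom 1 p + smult (int p) h"
proof (induction g)
  case 0
  then show ?case using assms prime_gt_0_nat by (simp add: power_0_left)
next
  case (pCons a g)
  then obtain h where h: "g ^ p = g \<circ>\<^sub>p monom 1 p + smult (int p) h" by blast
  obtain t where t: "a ^ p = a + int p * t" using fermat_little_int[OF assms] by blast
  have "pCons a g = [:a:] + monom 1 1 * g" by (simp add: monom_Suc)
  moreover obtain w where "([:a:] + monom 1 1 * g) ^ p = [:a:] ^ p + (monom 1 1 * g) ^ p + of_nat p * w"
    using add_power_prime_eq[OF assms] by blast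
  ultimately have "pCons a g ^ p = [:a:] ^ p + (monom 1 1 * g) ^ p + of_nat p * w" by simp
  also have "[:a:] ^ p = [:a:] + smult (int p) [:t:]" using t by (simp add: poly_const_pow)
  also have "(monom 1 1 * g) ^ p = monom 1 p * (g \<circ>\<^sub>p monom 1 p) + smult (int p) (monom 1 p * h)"
    unfolding power_mult_distrib x_pow_n h by (simp add: algebra_simps)
  also have "(of_nat p :: int poly) * w = smult (int p) w" by (simp add: of_nat_poly)
  also have "monom 1 p * (g \<circ>\<^sub>p monom 1 p) = pCons a g \<circ>\<^sub>p monom 1 p - [:a:]"
    by (simp add: pcompose_pCons)
  finally have "pCons a g ^ p = pCons a g \<circ>\<^sub>p monom 1 p + smult (int p) ([:t:] + monom 1 p * h + w)"
    by (simp add: smult_add_right)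
  then show ?case by blast
qed

section \<open>Irreducibility of cyclotomic polynomials\<close>

lemma monic_monom_1_minus_1:
  assumes "n > 0"
  shows "monic (monom 1 n - 1 :: 'a::comm_ring_1 poly)"
  using assms lead_coeff_add_le[of "-1" "monom 1 n :: 'a poly"] by (simp add: degree_monom_eq)

lemma poly_of_int_poly_monom_1_minus_1:
  "poly (of_int_poly (monom 1 n - 1)) x = x ^ n - (1 :: 'a::comm_ring_1)"
  by (simp add: hom_distribs poly_monom)

lemma not_dvd_cofactor_pcompose_prime:
  fixes f g :: "int poly"
  assumes "monic f" and "degree f > 0" and fg: "f * g = monom 1 n - 1" and "n > 0"
    and l: "prime l" and "\<not> l dvd n"
  shows "\<not> f dvd g \<circ>\<^sub>p monom 1 l"
proof
  assume "f dvd g \<circ>\<^sub>p monom 1 l"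
  then obtain q where q: "g \<circ>\<^sub>p monom 1 l = f * q" by (auto elim: dvdE)
  obtain h where h: "g ^ l = g \<circ>\<^sub>p monom 1 l + smult (int l) h"
    using int_poly_frobenius[OF l] by blast
  (* Differentiating f g = X^n - 1 shows that f and g generate the constant n; modulo l, where
     g^l = g(X^l) is a multiple of f, the l-th power of that identity puts (-n)^l into the
     ideal (f, l), which for monic f of positive degree forces l to divide n. *)
  define A where "A = smult (int n) g - monom 1 1 * pderiv g"
  define B where "B = monom 1 1 * pderiv f"
  have deriv: "f * pderiv g + g * pderiv f = monom (of_nat n) (n - 1)"
    using arg_cong[OF fg, of pderiv] by (simp add: pderiv_mult pderiv_diff pderiv_monom)
  have "f * A + (- B * g) = smult (int n) (f * g) - monom 1 1 * (f * pderiv g + g * pderiv f)"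
    unfolding A_def B_def by (simp add: algebra_simps)
  also have "\<dots> = smult (int n) (monom 1 n - 1) - monom (int n) n"
    using \<open>n > 0\<close> by (simp add: fg deriv mult_monom)
  also have "\<dots> = [:- int n:]"
    by (simp add: smult_diff_right smult_monom)
  finally have bezout: "f * A + (- B * g) = [:- int n:]" .
  obtain w where w: "(f * A + (- B * g)) ^ l = (f * A) ^ l + (- B * g) ^ l + of_nat l * w"
    using add_power_prime_eq[OF l] by blast
  obtain l' where l': "l = Suc l'" using l prime_gt_0_nat not0_implies_Suc by blast
  have "[:(- int n) ^ l:] = f * (f ^ l' * A ^ l + (- B) ^ l * q) + smult (int l) ((- B) ^ l * h + w)"
    using w unfolding bezout poly_const_pow power_mult_distrib h q
    by (simp add: l' of_nat_poly smult_add_right smult_diff_right algebra_simps)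
  then have "poly_mod.dvdm (int l) f [:(- int n) ^ l:]"
    by (intro poly_mod.div_mod_imp_dvdm) (metis mult.commute)
  then have "int l dvd (- int n) ^ l"
    using poly_mod.monic_dvdm_constant \<open>monic f\<close> \<open>degree f > 0\<close> by blast
  then have "int l dvd int n"
    using l prime_dvd_power[of "int l" "- int n"] by simp
  then have "l dvd n" by simp
  with \<open>\<not> l dvd n\<close> show False ..
qed

lemma of_rat_of_int_poly: "map_poly of_rat (of_int_poly P) = (of_int_poly P :: 'a::field_char_0 poly)"
  by (simp add: map_poly_map_poly o_def)

lemma monic_of_int_poly_dvd_imp_dvd:
  fixes A B :: "int poly"
  assumes "monic A" and dvd: "(of_int_poly A :: 'a::field_char_0 poly) dvd of_int_poly B"
  shows "A dvd B"
proof -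
  have "A \<noteq> 0" using \<open>monic A\<close> by auto
  obtain q r where "pseudo_divmod B A = (q, r)" by force
  with pseudo_divmod[OF \<open>A \<noteq> 0\<close>] \<open>monic A\<close>
  have B: "B = A * q + r" and r: "r = 0 \<or> degree r < degree A" by auto
  have "of_int_poly r = of_int_poly B - of_int_poly A * (of_int_poly q :: 'a poly)"
    using B by (simp add: hom_distribs)
  then have A_dvd_r: "(of_int_poly A :: 'a poly) dvd of_int_poly r" using dvd by simp
  have "r = 0"
  proof (rule ccontr)
    assume "r \<noteq> 0"
    then have "degree A \<le> degree r" using dvd_imp_degree_le[OF A_dvd_r] by simp
    with r \<open>r \<noteq> 0\<close> show False by simp
  qed
  with B show ?thesis by simp
qed

lemma monic_rat_factor_of_monic_int_poly:
  fixes P :: "int poly" and f g :: "rat poly"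
  assumes "monic P" and "monic f" and Pfg: "of_int_poly P = f * g"
  shows "\<exists>F H. f = of_int_poly F \<and> monic F \<and> P = F * H"
proof -
  obtain r F where rF: "rat_to_normalized_int_poly f = (r, F)" by force
  note norm = rat_to_normalized_int_poly[OF rF]
  obtain H where P: "P = F * H"
    using rat_to_int_factor_explicit[OF Pfg rF] by blast
  have "lead_coeff F * lead_coeff H = 1"
    using \<open>monic P\<close> unfolding P by (simp add: lead_coeff_mult)
  then have "lead_coeff F = 1 \<or> lead_coeff F = -1" using zmult_eq_1_iff by blast
  moreover have "r * of_int (lead_coeff F) = 1"
    using \<open>monic f\<close> norm(1,2) by (simp add: lead_coeff_smult)
  ultimately have "lead_coeff F = 1" and "r = 1" using norm(2) by auto
  with norm(1) P show ?thesis by auto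
qed

lemma rat_minimal_poly_exists:
  fixes w :: "'a::field_char_0" and P :: "rat poly"
  assumes "P \<noteq> 0" and "poly (map_poly of_rat P) w = 0"
  shows "\<exists>f. monic f \<and> poly (map_poly of_rat f) w = 0 \<and>
           (\<forall>Q. poly (map_poly of_rat Q) w = 0 \<longrightarrow> f dvd Q)"
proof -
  interpret of_rat_hom: map_poly_idom_hom "of_rat :: rat \<Rightarrow> 'a" ..
  define V where "V = {Q :: rat poly. Q \<noteq> 0 \<and> poly (map_poly of_rat Q) w = 0}"
  obtain Q where Q: "Q \<in> V" and Q_min: "\<And>R. R \<in> V \<Longrightarrow> degree Q \<le> degree R"
    using ex_has_least_nat[of "\<lambda>Q. Q \<in> V" P degree] assms unfolding V_def by blast
  define f where "f = smult (inverse (lead_coeff Q)) Q"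
  have "Q \<noteq> 0" using Q unfolding V_def by simp
  then have "monic f" and "degree f = degree Q" unfolding f_def by (simp_all add: lead_coeff_smult)
  have f_root: "poly (map_poly of_rat f) w = 0"
    using Q unfolding f_def V_def by (simp add: hom_distribs)
  have "f dvd R" if R_root: "poly (map_poly of_rat R) w = 0" for R
  proof (rule ccontr)
    assume "\<not> f dvd R"
    then have "R mod f \<noteq> 0" by (simp add: mod_eq_0_iff_dvd)
    moreover have "poly (map_poly of_rat (R mod f)) w = 0"
      using R_root f_root unfolding minus_mult_div_eq_mod[symmetric] by (simp add: hom_distribs)
    ultimately have "R mod f \<in> V" unfolding V_def by simp
    moreover have "degree (R mod f) < degree f"
      using \<open>R mod f \<noteq> 0\<close> \<open>monic f\<close> by (intro degree_mod_less') auto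
    ultimately show False using Q_min \<open>degree f = degree Q\<close> by fastforce
  qed
  with \<open>monic f\<close> f_root show ?thesis by blast
qed

lemma rat_minimal_poly_root_of_unity_power_prime:
  fixes w :: "'a::field_char_0" and f :: "rat poly"
  assumes "n > 0" and "w ^ n = 1" and "monic f" and f_root: "poly (map_poly of_rat f) w = 0"
    and f_min: "\<And>Q. poly (map_poly of_rat Q) w = 0 \<Longrightarrow> f dvd Q"
    and l: "prime l" and "\<not> l dvd n"
  shows "poly (map_poly of_rat f) (w ^ l) = 0"
proof (rule ccontr)
  assume f_nonroot: "poly (map_poly of_rat f) (w ^ l) \<noteq> 0"
  define X :: "int poly" where "X = monom 1 n - 1"
  have X_eval: "poly (of_int_poly X) x = x ^ n - 1" for x :: 'a
    unfolding X_def by (rule poly_of_int_poly_monom_1_minus_1)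
  have X_monic: "monic X" unfolding X_def using \<open>n > 0\<close> by (rule monic_monom_1_minus_1)
  obtain g where "of_int_poly X = f * g"
    using f_min[of "of_int_poly X"] \<open>w ^ n = 1\<close> by (auto simp: of_rat_of_int_poly X_eval elim: dvdE)
  then obtain F H where f: "f = of_int_poly F" and "monic F" and X: "X = F * H"
    using monic_rat_factor_of_monic_int_poly[OF X_monic \<open>monic f\<close>] by blast
  have "degree F > 0"
  proof (rule ccontr)
    assume "\<not> degree F > 0"
    then have "F = 1" using \<open>monic F\<close> monic_degree_0 by blast
    with f_root show False unfolding f by simp
  qed
  have "poly (of_int_poly X) (w ^ l) = 0"
    unfolding X_eval using \<open>w ^ n = 1\<close> by (simp flip: power_mult add: mult.commute[of l] power_mult)
  then have "poly (of_int_poly H) (w ^ l) = 0"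
    using f_nonroot by (simp add: X f of_rat_of_int_poly hom_distribs)
  then have "poly (map_poly of_rat (of_int_poly (H \<circ>\<^sub>p monom 1 l))) w = 0"
    by (simp add: of_rat_of_int_poly hom_distribs poly_pcompose poly_monom)
  then have "F dvd H \<circ>\<^sub>p monom 1 l"
    using f_min \<open>monic F\<close> monic_of_int_poly_dvd_imp_dvd unfolding f by blast
  moreover have "F * H = monom 1 n - 1" using X X_def by simp
  ultimately show False
    using not_dvd_cofactor_pcompose_prime \<open>monic F\<close> \<open>degree F > 0\<close> \<open>n > 0\<close> l \<open>\<not> l dvd n\<close>
    by blast
qed

lemma int_poly_root_of_unity_power_coprime:
  fixes w :: "'a::field_char_0" and P :: "int poly"
  assumes "n > 0" and "w ^ n = 1" and "gcd j n = 1" and "poly (of_int_poly P) w = 0"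
  shows "poly (of_int_poly P) (w ^ j) = 0"
  using assms(3,4)
proof (induction j arbitrary: P rule: less_induct)
  case (less j)
  show ?case
  proof (cases "j \<le> 1")
    case True
    with less.prems \<open>w ^ n = 1\<close> show ?thesis by (cases j) auto
  next
    case False
    then obtain l where l: "prime l" "l dvd j" using prime_factor_nat[of j] by auto
    then obtain m where j: "j = m * l" by (auto elim: dvdE simp: mult.commute)
    have "m > 0" using False unfolding j by (cases m) auto
    then have "m < j" using prime_gt_1_nat[OF l(1)] unfolding j by simp
    moreover have "gcd m n = 1" using less.prems(1) unfolding j
      by (metis gcd_dvd1 gcd_dvd2 gcd_greatest dvd_mult2 nat_dvd_1_iff_1)
    ultimately have P_root: "poly (of_int_poly P) (w ^ m) = 0" using less.IH less.prems(2) by simp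
    have "\<not> l dvd n"
      using less.prems(1) l by (metis gcd_greatest nat_dvd_1_iff_1 not_prime_1)
    show ?thesis
    proof (cases "P = 0")
      case False
      interpret of_rat_hom: map_poly_idom_hom "of_rat :: rat \<Rightarrow> 'a" ..
      have "(w ^ m) ^ n = 1" using \<open>w ^ n = 1\<close> by (metis power_mult mult.commute power_one)
      obtain f where "monic f" and f_root: "poly (map_poly of_rat f) (w ^ m) = 0"
        and f_min: "\<And>Q. poly (map_poly of_rat Q) (w ^ m) = 0 \<Longrightarrow> f dvd Q"
        using rat_minimal_poly_exists[of "of_int_poly P" "w ^ m"] P_root False
        by (auto simp: of_rat_of_int_poly)
      have "poly (map_poly of_rat f) ((w ^ m) ^ l) = 0"
        using rat_minimal_poly_root_of_unity_power_prime[OF \<open>n > 0\<close> \<open>(w ^ m) ^ n = 1\<close>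
            \<open>monic f\<close> f_root f_min l(1) \<open>\<not> l dvd n\<close>] .
      moreover obtain g where "of_int_poly P = f * g"
        using f_min[of "of_int_poly P"] P_root by (auto simp: of_rat_of_int_poly elim: dvdE)
      then have "(of_int_poly P :: 'a poly) = map_poly of_rat f * map_poly of_rat g"
        by (metis of_rat_of_int_poly of_rat_hom.hom_mult)
      ultimately show ?thesis unfolding j power_mult by simp
    qed simp
  qed
qed

section \<open>From the complex primitive root to roots of unity in other fields\<close>

definition primitive_root_of_unity :: "nat \<Rightarrow> 'a::comm_ring_1 \<Rightarrow> bool" where
  "primitive_root_of_unity n z \<longleftrightarrow> 0 < n \<and> z ^ n = 1 \<and> (\<forall>d. 0 < d \<longrightarrow> d < n \<longrightarrow> z ^ d \<noteq> 1)"

lemma complex_root_of_unity_eq_cis_power: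
  assumes "n > 0" and "(x :: complex) ^ n = 1"
  obtains k where "k < n" and "x = cis (2 * pi / real n) ^ k"
proof -
  obtain k where "k < n" and "x = cis (2 * pi * real k / real n)"
    using bij_betw_imp_surj_on[OF bij_betw_roots_unity[OF \<open>n > 0\<close>]] assms(2) by blast
  then show thesis using that by (simp add: DeMoivre field_simps)
qed

lemma monic_int_poly_dvd_power_if_complex_roots:
  fixes X Q :: "int poly"
  assumes "monic X" and roots: "\<And>x :: complex. poly (of_int_poly X) x = 0 \<Longrightarrow> poly (of_int_poly Q) x = 0"
  shows "\<exists>N. X dvd Q ^ N"
proof -
  have "(of_int_poly X :: complex poly) \<noteq> 0" using \<open>monic X\<close> by auto
  then have "(of_int_poly X :: complex poly) dvd of_int_poly Q ^ degree (of_int_poly X :: complex poly)"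
    using nullstellensatz_univariate[of "of_int_poly X" "of_int_poly Q"] roots by blast
  then have "(of_int_poly X :: complex poly) dvd of_int_poly (Q ^ degree X)"
    by (simp add: hom_distribs)
  then show ?thesis using monic_of_int_poly_dvd_imp_dvd \<open>monic X\<close> by blast
qed

lemma complex_root_of_unity_int_poly_root_or_nonprimitive:
  fixes P :: "int poly" and x :: complex
  assumes "n > 0" and "x ^ n = 1" and P_root: "poly (of_int_poly P) (cis (2 * pi / real n)) = 0"
  shows "poly (of_int_poly P) x = 0 \<or> (\<exists>q\<in>prime_factors n. x ^ (n div q) = 1)"
proof -
  obtain k where "k < n" and x: "x = cis (2 * pi / real n) ^ k"
    using complex_root_of_unity_eq_cis_power[OF assms(1,2)] by blast
  show ?thesis
  proof (cases "gcd k n = 1")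
    case True
    then show ?thesis
      using int_poly_root_of_unity_power_coprime[OF \<open>n > 0\<close> _ True P_root] \<open>n > 0\<close>
      unfolding x by (simp add: DeMoivre)
  next
    case False
    then obtain q where q: "prime q" "q dvd k" "q dvd n"
      using prime_factor_nat[of "gcd k n"] by auto
    then have "k * (n div q) = n * (k div q)" by (auto elim!: dvdE)
    then have "x ^ (n div q) = (cis (2 * pi / real n) ^ n) ^ (k div q)"
      unfolding x by (metis power_mult)
    then have "x ^ (n div q) = 1" using \<open>n > 0\<close> by (simp add: DeMoivre)
    then show ?thesis using q \<open>n > 0\<close> by (auto simp: prime_factors_dvd)
  qed
qed

lemma primitive_root_of_unity_power_div_prime:
  assumes "primitive_root_of_unity n z" and "q \<in> prime_factors n"
  shows "z ^ (n div q) \<noteq> 1"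
proof -
  have "n > 0" "prime q" "q dvd n"
    using assms by (auto simp: primitive_root_of_unity_def in_prime_factors_iff)
  then have "0 < n div q" "n div q < n"
    using prime_gt_1_nat by (auto simp: div_greater_zero_iff dvd_imp_le)
  then show ?thesis using assms(1) unfolding primitive_root_of_unity_def by blast
qed

lemma int_poly_root_cis_imp_root:
  fixes z :: "'a::field" and P :: "int poly"
  assumes z: "primitive_root_of_unity n z"
    and P_root: "poly (of_int_poly P) (cis (2 * pi / real n)) = 0"
  shows "poly (of_int_poly P) z = 0"
proof -
  have "n > 0" and "z ^ n = 1" using z unfolding primitive_root_of_unity_def by simp_all
  define X :: "int poly" where "X = monom 1 n - 1"
  (* H vanishes at the non-primitive n-th roots of unity, but not at z. *)
  define H :: "int poly" where "H = (\<Prod>q\<in>prime_factors n. monom 1 (n div q) - 1)"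
  have X_eval: "poly (of_int_poly X) x = x ^ n - 1" for x :: "'b::comm_ring_1"
    unfolding X_def by (rule poly_of_int_poly_monom_1_minus_1)
  have H_eval: "poly (of_int_poly H) x = (\<Prod>q\<in>prime_factors n. x ^ (n div q) - 1)" for x :: "'b::comm_ring_1"
    unfolding H_def by (simp add: hom_distribs poly_monom poly_prod)
  have "monic X" unfolding X_def using \<open>n > 0\<close> by (rule monic_monom_1_minus_1)
  moreover have "poly (of_int_poly (P * H)) x = 0" if "poly (of_int_poly X) x = 0" for x :: complex
    using complex_root_of_unity_int_poly_root_or_nonprimitive[OF \<open>n > 0\<close> _ P_root, of x] that
    by (auto simp: X_eval H_eval hom_distribs)
  ultimately obtain N K where K: "(P * H) ^ N = X * K"
    using monic_int_poly_dvd_power_if_complex_roots by (meson dvdE)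
  have "(poly (of_int_poly P) z * poly (of_int_poly H) z) ^ N = poly (of_int_poly ((P * H) ^ N)) z"
    by (simp add: hom_distribs)
  also have "\<dots> = 0"
    unfolding K using \<open>z ^ n = 1\<close> by (simp add: hom_distribs X_eval)
  finally have "poly (of_int_poly P) z * poly (of_int_poly H) z = 0" by simp
  moreover have "poly (of_int_poly H) z \<noteq> 0"
    using primitive_root_of_unity_power_div_prime[OF z] unfolding H_eval by simp
  ultimately show ?thesis by simp
qed

section \<open>Orders of elements of finite fields\<close>

lemma power_diff_eq_1:
  fixes z :: "'a::field"
  assumes "z \<noteq> 0" and "a \<le> b" and "z ^ a = z ^ b"
  shows "z ^ (b - a) = 1"
proof -
  have "z ^ a * z ^ (b - a) = z ^ b"
    using \<open>a \<le> b\<close> by (simp flip: power_add)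
  then have "z ^ a * z ^ (b - a) = z ^ a * 1"
    using \<open>z ^ a = z ^ b\<close> by simp
  then show ?thesis using \<open>z \<noteq> 0\<close> by simp
qed

lemma finite_field_primitive_root_card_powers:
  fixes z :: "'a::{field,finite}"
  assumes "z \<noteq> 0"
  shows "primitive_root_of_unity (card {z ^ m | m. True}) z"
proof -
  have "\<not> inj (\<lambda>m::nat. z ^ m)"
    using finite_imageD[of "\<lambda>m::nat. z ^ m" UNIV] by auto
  then obtain a b :: nat where "a < b" and "z ^ a = z ^ b"
    unfolding inj_def by (metis linorder_neqE_nat)
  then have period: "\<exists>d>0. z ^ d = 1"
    using power_diff_eq_1[OF \<open>z \<noteq> 0\<close>] by (metis less_imp_le zero_less_diff)
  define d where "d = (LEAST d. d > 0 \<and> z ^ d = 1)"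
  have "d > 0" and "z ^ d = 1"
    using LeastI_ex[OF period] unfolding d_def by auto
  have d_min: "z ^ e \<noteq> 1" if "0 < e" "e < d" for e
    using not_less_Least[of e "\<lambda>d. d > 0 \<and> z ^ d = 1"] that unfolding d_def by auto
  have power_mod: "z ^ m = z ^ (m mod d)" for m
  proof -
    have "z ^ m = (z ^ d) ^ (m div d) * z ^ (m mod d)"
      by (simp flip: power_mult power_add)
    then show ?thesis using \<open>z ^ d = 1\<close> by simp
  qed
  have "{z ^ m | m. True} = (\<lambda>m. z ^ m) ` {..<d}"
  proof (intro equalityI subsetI)
    fix y assume "y \<in> {z ^ m | m. True}"
    then obtain m where "y = z ^ (m mod d)" using power_mod by auto
    then show "y \<in> (\<lambda>m. z ^ m) ` {..<d}" using \<open>d > 0\<close> by simp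
  qed auto
  moreover have "inj_on (\<lambda>m. z ^ m) {..<d}"
  proof (rule linorder_inj_onI)
    fix a b assume "a < b" "a \<in> {..<d}" "b \<in> {..<d}"
    then show "z ^ a \<noteq> z ^ b"
      using d_min[of "b - a"] power_diff_eq_1[OF \<open>z \<noteq> 0\<close>, of a b] by auto
  qed auto
  ultimately have "card {z ^ m | m. True} = d" by (simp add: card_image)
  with \<open>d > 0\<close> \<open>z ^ d = 1\<close> d_min show ?thesis
    unfolding primitive_root_of_unity_def by auto
qed

lemma primitive_root_of_unity_card_gen_mult_subgroup:
  fixes z :: "'a::{field,finite}"
  assumes gen: "gen_mult_subgroup S = {z ^ m | m. True}" and "0 \<notin> S"
  shows "primitive_root_of_unity (card (gen_mult_subgroup S)) z"
proof -
  have "mult_subgroup (UNIV - {0 :: 'a})" unfolding mult_subgroup_def by auto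
  with \<open>0 \<notin> S\<close> have "0 \<notin> gen_mult_subgroup S" unfolding gen_mult_subgroup_def by auto
  moreover have "z \<in> gen_mult_subgroup S" unfolding gen by (auto intro: exI[of _ 1])
  ultimately have "z \<noteq> 0" by auto
  then show ?thesis unfolding gen by (rule finite_field_primitive_root_card_powers)
qed

section \<open>Lifting the MDS property\<close>

lemma comm_ring_hom_eval_int_poly: "comm_ring_hom (\<lambda>p :: int poly. poly (of_int_poly p) (x :: 'a::comm_ring_1))"
  by unfold_locales (simp_all add: hom_distribs)

lemma col_submat_map_mat:
  assumes "A \<in> carrier_mat k N" and "\<forall>j<k. c j < N"
  shows "col_submat (map_mat f A) k c = map_mat f (col_submat A k c)"
  using assms by (intro eq_matI) (auto simp: col_submat_def)

lemma generates_MDS_eval_int_poly_mat_cis: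
  fixes A :: "int poly mat" and z :: "'a::field"
  assumes z: "primitive_root_of_unity n z" and A: "A \<in> carrier_mat k N"
    and MDS: "generates_MDS N k (map_mat (\<lambda>p. poly (of_int_poly p) z) A)"
  shows "generates_MDS N k (map_mat (\<lambda>p. poly (of_int_poly p) (cis (2 * pi / real n))) A)"
  unfolding generates_MDS_def
proof (intro conjI allI impI)
  interpret eval_z: comm_ring_hom "\<lambda>p :: int poly. poly (of_int_poly p) z"
    by (rule comm_ring_hom_eval_int_poly)
  interpret eval_cis: comm_ring_hom "\<lambda>p :: int poly. poly (of_int_poly p) (cis (2 * pi / real n))"
    by (rule comm_ring_hom_eval_int_poly)
  fix c assume c: "strict_mono_on {0..<k} c" "\<forall>j<k. c j < N"
  define D where "D = det (col_submat A k c)"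
  have "det (col_submat (map_mat (\<lambda>p. poly (of_int_poly p) z) A) k c) \<noteq> 0"
    using MDS c unfolding generates_MDS_def by blast
  then have "poly (of_int_poly D) z \<noteq> 0"
    unfolding D_def col_submat_map_mat[OF A c(2)] eval_z.hom_det .
  then have "poly (of_int_poly D) (cis (2 * pi / real n)) \<noteq> 0"
    using int_poly_root_cis_imp_root[OF z, of D] by auto
  then show "det (col_submat (map_mat (\<lambda>p. poly (of_int_poly p) (cis (2 * pi / real n))) A) k c) \<noteq> 0"
    unfolding D_def col_submat_map_mat[OF A c(2)] eval_cis.hom_det .
qed (use A MDS in \<open>auto simp: generates_MDS_def\<close>)

lemma power_int_eq_power_mod:
  fixes x :: "'a::field"
  assumes "x \<noteq> 0" and "x ^ n = 1" and "n > 0"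
  shows "x powi e = x ^ nat (e mod int n)"
proof -
  have "x powi e = x powi (int n * (e div int n)) * x powi (e mod int n)"
    using \<open>x \<noteq> 0\<close> by (simp flip: power_int_add)
  also have "x powi (int n * (e div int n)) = 1"
    using \<open>x ^ n = 1\<close> by (simp add: power_int_mult)
  also have "x powi (e mod int n) = x ^ nat (e mod int n)"
    using \<open>n > 0\<close> by (simp add: power_int_def)
  finally show ?thesis by simp
qed

definition monom_exponent_mat :: "'a::zero mat \<Rightarrow> (nat \<Rightarrow> nat \<Rightarrow> int) \<Rightarrow> nat \<Rightarrow> int poly mat" where
  "monom_exponent_mat B e n =
     mat (dim_row B) (dim_col B) (\<lambda>(i, j). if B $$ (i, j) = 0 then 0 else monom 1 (nat (e i j mod int n)))"

lemma map_mat_eval_monom_exponent_mat: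
  fixes x :: "'a::field"
  assumes "x \<noteq> 0" and "x ^ n = 1" and "n > 0"
  shows "map_mat (\<lambda>p. poly (of_int_poly p) x) (monom_exponent_mat B e n) =
           mat (dim_row B) (dim_col B) (\<lambda>(i, j). if B $$ (i, j) = 0 then 0 else x powi e i j)"
  using power_int_eq_power_mod[OF assms]
  by (intro eq_matI) (auto simp: monom_exponent_mat_def poly_monom)

theorem mainTheorem1:
  fixes G' :: "'a::{field,finite} mat"
    and N k n :: nat
    and z' :: 'a
    and e :: "nat \<Rightarrow> nat \<Rightarrow> int"
    and G :: "complex mat"
  assumes MDS': "generates_MDS N k G'"
    and gen: "gen_mult_subgroup {G' $$ (i, j) | i j. i < k \<and> j < N \<and> G' $$ (i, j) \<noteq> 0}
                = {z' ^ m | m. True}"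
    and n_def: "n = card (gen_mult_subgroup {G' $$ (i, j) | i j. i < k \<and> j < N \<and> G' $$ (i, j) \<noteq> 0})"
    and e_def: "\<And>i j. i < k \<Longrightarrow> j < N \<Longrightarrow> G' $$ (i, j) \<noteq> 0 \<Longrightarrow> G' $$ (i, j) = z' powi e i j"
    and G_dim: "G \<in> carrier_mat k N"
    and G_zero: "\<And>i j. i < k \<Longrightarrow> j < N \<Longrightarrow> G' $$ (i, j) = 0 \<Longrightarrow> G $$ (i, j) = 0"
    and G_nz: "\<And>i j. i < k \<Longrightarrow> j < N \<Longrightarrow> G' $$ (i, j) \<noteq> 0 \<Longrightarrow>
                 G $$ (i, j) = cis (2 * pi / real n) powi e i j"
  shows "generates_MDS N k G"
proof -
  have z': "primitive_root_of_unity n z'"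
    unfolding n_def by (rule primitive_root_of_unity_card_gen_mult_subgroup[OF gen]) auto
  then have "z' ^ n = 1" and "n > 0" unfolding primitive_root_of_unity_def by simp_all
  then have "z' \<noteq> 0" by (auto simp: power_0_left)
  have cis_n: "cis (2 * pi / real n) ^ n = 1" using \<open>n > 0\<close> by (simp add: DeMoivre)
  have G': "G' \<in> carrier_mat k N" using MDS' unfolding generates_MDS_def by simp
  define A where "A = monom_exponent_mat G' e n"
  have A: "A \<in> carrier_mat k N" using G' unfolding A_def monom_exponent_mat_def by simp
  have "map_mat (\<lambda>p. poly (of_int_poly p) z') A = G'"
    using G' e_def unfolding A_def map_mat_eval_monom_exponent_mat[OF \<open>z' \<noteq> 0\<close> \<open>z' ^ n = 1\<close> \<open>n > 0\<close>]
    by (intro eq_matI) auto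
  moreover have "map_mat (\<lambda>p. poly (of_int_poly p) (cis (2 * pi / real n))) A = G"
    using G' G_dim G_zero G_nz
    unfolding A_def map_mat_eval_monom_exponent_mat[OF cis_neq_zero cis_n \<open>n > 0\<close>]
    by (intro eq_matI) auto
  ultimately show ?thesis
    using generates_MDS_eval_int_poly_mat_cis[OF z' A] MDS' by simp
qed

end
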